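(* Assume the setting described in the context. Let $f\in\acute{\mathcal J}$ and $g\in\grave{\mathcal J}$ be weight invariants with weights $\widehat f,\widehat g$, and let $s$ be an integer with $0\le s\le\widehat f$, $0\le s\le\widehat g$. Then there is a nonzero real constant $c$ such that $\acute{\mathcal X}^s(f,g)^{(s)}=c\,fg$, and $\acute{\mathcal X}^k(f,g)^{(s)}=0$ for every integer $k>s$.
   Context: For a real square matrix $A_0$ put $\mathcal D_{A_0}f(\mathbf x)=f'(\mathbf x)A_0\mathbf x$. Let $(\acute X,\acute Y,\acute Z)$ and $(\grave X,\grave Y,\grave Z)$ be $\mathfrak{sl}_2$ triads ($[X,Y]=Z,[Z,X]=2X,[Z,Y]=-2Y$) of real $n\times n$ resp. $m\times m$ matrices, with independent variables $\mathbf x\in\mathbb R^n$, $\mathbf y\in\mathbb R^m$. On $\mathbb R[[\mathbf x]]$: $\acute{\mathcal X}=\mathcal D_{\acute Y},\acute{\mathcal Y}=\mathcal D_{\acute X},\acute{\mathcal Z}=\mathcal D_{\acute Z}$; on $\mathbb R[[\mathbf y]]$: $\grave{\mathcal X}=\mathcal D_{\grave Y},\grave{\mathcal Y}=\mathcal D_{\grave X},\grave{\mathcal Z}=\mathcal D_{\grave Z}$; these are extended to $\mathbb R[[\mathbf x,\mathbf y]]$ acting only on the $\mathbf x$ (resp. $\mathbf y$) variables. $\acute{\mathcal J}=\ker\acute{\mathcal X}$, $\grave{\mathcal J}=\ker\grave{\mathcal X}$. A weight invariant is $f\in\acute{\mathcal J}$ with $\acute{\mathcal Z}f=\widehat ff$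 (similarly in $\grave{\mathcal J}$). External transvectant: $(f,g)^{(s)}=\sum_{j=0}^s(-1)^j\binom sj\frac{(\widehat f-j)!}{(\widehat f-s)!}\frac{(\widehat g-s+j)!}{(\widehat g-s)!}(\acute{\mathcal Y}^jf)(\grave{\mathcal Y}^{s-j}g)$. *)

theory Defs
  imports "HOL-Analysis.Analysis"
begin

text \<open>Formal power series in the variables indexed by a finite type 'n are
represented by their coefficient functions: the coefficient of the monomial
x^alpha (alpha :: 'n \<Rightarrow> nat an exponent vector) is F alpha.\<close>

type_synonym 'n ps = "('n \<Rightarrow> nat) \<Rightarrow> real"
type_synonym ('n, 'm) ps2 = "('n \<Rightarrow> nat) \<Rightarrow> ('m \<Rightarrow> nat) \<Rightarrow> real"

definition sl2_triad :: "real^'n^'n \<Rightarrow> real^'n^'n \<Rightarrow> real^'n^'n \<Rightarrow> bool" where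
  "sl2_triad X Y Z \<longleftrightarrow>
     X ** Y - Y ** X = Z \<and> Z ** X - X ** Z = 2 *\<^sub>R X \<and> Z ** Y - Y ** Z = - (2 *\<^sub>R Y)"

text \<open>D_A f = f'(x) A x = sum_i (d f / d x_i) * (A x)_i = sum_{i,j} A_ij x_j d_i f,
written coefficientwise: x_j * d_i (x^beta) contributes to x^alpha with
beta = alpha - e_j + e_i.\<close>
definition ps_D :: "real^'n^'n \<Rightarrow> 'n::finite ps \<Rightarrow> 'n ps" where
  "ps_D A f = (\<lambda>\<alpha>. \<Sum>i\<in>UNIV. \<Sum>j\<in>UNIV. A $ i $ j *
      (if \<alpha> j = 0 then 0
       else (let \<beta> = \<alpha>(j := \<alpha> j - 1) in real (\<beta> i + 1) * f (\<beta>(i := \<beta> i + 1)))))"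

definition on_x :: "('n ps \<Rightarrow> 'n ps) \<Rightarrow> ('n, 'm) ps2 \<Rightarrow> ('n, 'm) ps2" where
  "on_x T F = (\<lambda>\<alpha> \<beta>. T (\<lambda>\<gamma>. F \<gamma> \<beta>) \<alpha>)"

definition ext_prod :: "'n ps \<Rightarrow> 'm ps \<Rightarrow> ('n, 'm) ps2" where
  "ext_prod f g = (\<lambda>\<alpha> \<beta>. f \<alpha> * g \<beta>)"

text \<open>External transvectant (f,g)^(s) with acute Y = D_{acute X}, grave Y = D_{grave X};
wtf, wtg are the weights of f and g.\<close>
definition ext_transvectant ::
  "real^'n^'n \<Rightarrow> real^'m^'m \<Rightarrow> nat \<Rightarrow> nat \<Rightarrow> nat \<Rightarrow> 'n::finite ps \<Rightarrow> 'm::finite ps \<Rightarrow> ('n, 'm) ps2" where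
  "ext_transvectant Xa Xg wtf wtg s f g = (\<lambda>\<alpha> \<beta>.
     \<Sum>j\<le>s. (-1) ^ j * real (s choose j)
        * (fact (wtf - j) / fact (wtf - s)) * (fact (wtg - s + j) / fact (wtg - s))
        * (((ps_D Xa) ^^ j) f \<alpha>) * (((ps_D Xg) ^^ (s - j)) g \<beta>))"

end

theory Submission imports Defs begin

text \<open>The transvectant is a combination of products (Y^j f)(Y^(s-j) g), where Y = D_X lowers the
weight by 2. Since f is a highest weight vector of weight w, the sl2 relations give
X^k Y^j f = P(k,j) Y^(j-k) f for X = D_Y, with P(k,j) = prod_(i<k) (j-i)(w-j+i+1). This factor
vanishes for k > j and is nonzero for k = j \<le> w. Hence X^k kills every term of the
transvectant when k > s, and for k = s only the term j = s survives, which is a nonzero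
multiple of f g.\<close>

text \<open>The derivation x_j d/dx_i, written on coefficient functions.\<close>
definition ps_E :: "'n::finite \<Rightarrow> 'n \<Rightarrow> 'n ps \<Rightarrow> 'n ps" where
  "ps_E i j f = (\<lambda>\<alpha>. if \<alpha> j = 0 then 0
     else (let \<beta> = \<alpha>(j := \<alpha> j - 1) in real (\<beta> i + 1) * f (\<beta>(i := \<beta> i + 1))))"

lemma ps_D_eq_sum_ps_E: "ps_D A f \<alpha> = (\<Sum>i\<in>UNIV. \<Sum>j\<in>UNIV. A$i$j * ps_E i j f \<alpha>)"
  by (simp add: ps_D_def ps_E_def)

lemma ps_E_sum: "ps_E i j (\<lambda>\<gamma>. \<Sum>m\<in>S. h m \<gamma>) \<alpha> = (\<Sum>m\<in>S. ps_E i j (h m) \<alpha>)"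
  by (simp add: ps_E_def Let_def sum_distrib_left)

lemma ps_E_scale: "ps_E i j (\<lambda>\<gamma>. c * h \<gamma>) \<alpha> = c * ps_E i j h \<alpha>"
  by (simp add: ps_E_def Let_def algebra_simps)

text \<open>Exponent shifts alpha + e_k - e_j and alpha + e_i + e_k - e_j - e_l are computed in int,
so that the commutator computation reduces to an identity between integer polynomials.\<close>
abbreviation ind :: "bool \<Rightarrow> int" where "ind b \<equiv> of_bool b"

definition shift :: "'n \<Rightarrow> 'n \<Rightarrow> ('n \<Rightarrow> nat) \<Rightarrow> ('n \<Rightarrow> nat)" where
  "shift k j \<alpha> = (\<lambda>t. nat (int (\<alpha> t) + ind (t = k) - ind (t = j)))"

definition shift2 :: "'n \<Rightarrow> 'n \<Rightarrow> 'n \<Rightarrow> 'n \<Rightarrow> ('n \<Rightarrow> nat) \<Rightarrow> ('n \<Rightarrow> nat)" where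
  "shift2 i j k l \<alpha> = (\<lambda>t. nat (int (\<alpha> t) + ind (t = i) + ind (t = k) - ind (t = j) - ind (t = l)))"

lemma shift2_commute: "shift2 k l i j \<alpha> = shift2 i j k l \<alpha>"
  by (auto simp: shift2_def fun_eq_iff)

lemma ps_E_eq:
  "ps_E k j f \<alpha> = of_int (ind (int (\<alpha> j) \<ge> 1) * (int (\<alpha> k) - ind (k = j) + 1)) * f (shift k j \<alpha>)"
proof (cases "\<alpha> j = 0")
  case False
  then have "\<alpha>(j := \<alpha> j - 1, k := (\<alpha>(j := \<alpha> j - 1)) k + 1) = shift k j \<alpha>"
    by (auto simp: shift_def fun_eq_iff)
  with False show ?thesis by (auto simp: ps_E_def Let_def)
qed (simp add: ps_E_def)

lemma ps_E_ps_E_eq: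
  "ps_E i j (ps_E k l f) \<alpha> =
     of_int (ind (int (\<alpha> j) \<ge> 1) * ind (int (\<alpha> l) - ind (l = j) + ind (l = i) \<ge> 1)
       * (int (\<alpha> i) - ind (i = j) + 1) * (int (\<alpha> k) - ind (k = j) + ind (k = i) - ind (k = l) + 1))
     * f (shift2 i j k l \<alpha>)"
proof (cases "\<alpha> j = 0")
  case False
  have shift_l: "int (shift i j \<alpha> l) = int (\<alpha> l) - ind (l = j) + ind (l = i)"
    and shift_k: "int (shift i j \<alpha> k) = int (\<alpha> k) - ind (k = j) + ind (k = i)"
    using False by (auto simp: shift_def)
  have "ps_E i j (ps_E k l f) \<alpha> = of_int (int (\<alpha> i) - ind (i = j) + 1) * ps_E k l f (shift i j \<alpha>)"
    using False ps_E_eq[of i j "ps_E k l f" \<alpha>] by (simp add: of_nat_diff)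
  also have "\<dots> = of_int (int (\<alpha> i) - ind (i = j) + 1) *
      (of_int (ind (int (shift i j \<alpha> l) \<ge> 1) * (int (shift i j \<alpha> k) - ind (k = l) + 1))
       * f (shift k l (shift i j \<alpha>)))"
    by (simp only: ps_E_eq)
  also have "\<dots> = of_int (ind (int (\<alpha> j) \<ge> 1) * ind (int (\<alpha> l) - ind (l = j) + ind (l = i) \<ge> 1)
       * (int (\<alpha> i) - ind (i = j) + 1) * (int (\<alpha> k) - ind (k = j) + ind (k = i) - ind (k = l) + 1))
     * f (shift2 i j k l \<alpha>)"
  proof (cases "int (shift i j \<alpha> l) \<ge> 1")
    case True
    then have "shift k l (shift i j \<alpha>) = shift2 i j k l \<alpha>"
      using False by (auto simp: shift_def shift2_def fun_eq_iff)
    with True False show ?thesis unfolding shift_l shift_k by (simp add: of_nat_diff)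
  qed (use shift_l in simp)
  finally show ?thesis .
qed (simp add: ps_E_def)

lemma ps_E_commutator_coeff:
  fixes i j k l :: 'n and a :: "'n \<Rightarrow> int"
  assumes "\<And>t. a t \<ge> 0"
  shows "ind (a j \<ge> 1) * ind (a l - ind (l = j) + ind (l = i) \<ge> 1)
       * (a i - ind (i = j) + 1) * (a k - ind (k = j) + ind (k = i) - ind (k = l) + 1)
     - ind (a l \<ge> 1) * ind (a j - ind (j = l) + ind (j = k) \<ge> 1)
       * (a k - ind (k = l) + 1) * (a i - ind (i = l) + ind (i = k) - ind (i = j) + 1)
     = ind (i = l) * (ind (a j \<ge> 1) * (a k - ind (k = j) + 1))
       - ind (k = j) * (ind (a l \<ge> 1) * (a i - ind (i = l) + 1))"
proof -
  have nonneg_cases: "\<And>t. (1 \<le> a t) = (a t \<noteq> 0)" "\<And>t. (2 \<le> a t) = (a t \<noteq> 0 \<and> a t \<noteq> 1)"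
    using assms by (smt (verit))+
  show ?thesis
    using assms[of i] assms[of j] assms[of k] assms[of l]
    by (cases "i = j"; cases "i = k"; cases "i = l"; cases "j = k"; cases "j = l"; cases "k = l")
      (auto simp: of_bool_def algebra_simps nonneg_cases)
qed

lemma ps_E_commutator:
  "ps_E i j (ps_E k l f) \<alpha> - ps_E k l (ps_E i j f) \<alpha>
     = of_bool (i = l) * ps_E k j f \<alpha> - of_bool (k = j) * ps_E i l f \<alpha>"
proof -
  define a where "a t = int (\<alpha> t)" for t
  define c1 where "c1 = ind (a j \<ge> 1) * ind (a l - ind (l = j) + ind (l = i) \<ge> 1)
       * (a i - ind (i = j) + 1) * (a k - ind (k = j) + ind (k = i) - ind (k = l) + 1)"
  define c2 where "c2 = ind (a l \<ge> 1) * ind (a j - ind (j = l) + ind (j = k) \<ge> 1)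
       * (a k - ind (k = l) + 1) * (a i - ind (i = l) + ind (i = k) - ind (i = j) + 1)"
  define c3 where "c3 = ind (a j \<ge> 1) * (a k - ind (k = j) + 1)"
  define c4 where "c4 = ind (a l \<ge> 1) * (a i - ind (i = l) + 1)"
  have coeff: "c1 - c2 = ind (i = l) * c3 - ind (k = j) * c4"
    unfolding c1_def c2_def c3_def c4_def by (rule ps_E_commutator_coeff) (simp add: a_def)
  have "ps_E i j (ps_E k l f) \<alpha> = of_int c1 * f (shift2 i j k l \<alpha>)"
    unfolding ps_E_ps_E_eq c1_def a_def ..
  moreover have "ps_E k l (ps_E i j f) \<alpha> = of_int c2 * f (shift2 i j k l \<alpha>)"
    unfolding ps_E_ps_E_eq c2_def a_def shift2_commute[of k l i j] ..
  ultimately have "ps_E i j (ps_E k l f) \<alpha> - ps_E k l (ps_E i j f) \<alpha> = of_int (c1 - c2) * f (shift2 i j k l \<alpha>)"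
    by (simp add: algebra_simps)
  also have "\<dots> = of_int (ind (i = l) * c3 - ind (k = j) * c4) * f (shift2 i j k l \<alpha>)"
    by (simp only: coeff)
  also have "\<dots> = of_bool (i = l) * ps_E k j f \<alpha> - of_bool (k = j) * ps_E i l f \<alpha>"
  proof -
    have "ps_E k j f \<alpha> = of_int c3 * f (shift k j \<alpha>)" "ps_E i l f \<alpha> = of_int c4 * f (shift i l \<alpha>)"
      unfolding ps_E_eq c3_def c4_def a_def by simp_all
    moreover have "i = l \<Longrightarrow> shift k j \<alpha> = shift2 i j k l \<alpha>" "k = j \<Longrightarrow> shift i l \<alpha> = shift2 i j k l \<alpha>"
      by (auto simp: shift_def shift2_def fun_eq_iff)
    ultimately show ?thesis by (auto simp: algebra_simps)
  qed
  finally show ?thesis .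
qed

lemma ps_D_sum: "ps_D A (\<lambda>\<gamma>. \<Sum>m\<in>S. h m \<gamma>) \<alpha> = (\<Sum>m\<in>S. ps_D A (h m) \<alpha>)"
  unfolding ps_D_eq_sum_ps_E ps_E_sum by (simp add: sum_distrib_left sum.swap[of _ S])

lemma ps_D_scale: "ps_D A (\<lambda>\<gamma>. c * h \<gamma>) \<alpha> = c * ps_D A h \<alpha>"
  unfolding ps_D_eq_sum_ps_E ps_E_scale by (simp add: sum_distrib_left algebra_simps)

lemma ps_D_funpow_sum:
  "(ps_D A ^^ k) (\<lambda>\<gamma>. \<Sum>j\<in>S. c j * h j \<gamma>) = (\<lambda>\<alpha>. \<Sum>j\<in>S. c j * (ps_D A ^^ k) (h j) \<alpha>)"
  by (induction k) (simp_all add: ps_D_sum ps_D_scale)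

lemma ps_D_matrix_diff: "ps_D (A - B) f \<alpha> = ps_D A f \<alpha> - ps_D B f \<alpha>"
  unfolding ps_D_eq_sum_ps_E by (simp add: algebra_simps sum_subtractf)

lemma ps_D_matrix_scaleR: "ps_D (c *\<^sub>R A) f \<alpha> = c * ps_D A f \<alpha>"
  unfolding ps_D_eq_sum_ps_E by (simp add: algebra_simps sum_distrib_left)

lemma ps_D_matrix_uminus: "ps_D (- A) f \<alpha> = - ps_D A f \<alpha>"
  unfolding ps_D_eq_sum_ps_E by (simp add: sum_negf)

lemma ps_D_ps_D_eq:
  "ps_D A (ps_D B f) \<alpha> = (\<Sum>i\<in>UNIV. \<Sum>j\<in>UNIV. \<Sum>k\<in>UNIV. \<Sum>l\<in>UNIV. A$i$j * B$k$l * ps_E i j (ps_E k l f) \<alpha>)"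
proof -
  have "ps_D B f = (\<lambda>\<gamma>. \<Sum>k\<in>UNIV. \<Sum>l\<in>UNIV. B$k$l * ps_E k l f \<gamma>)"
    by (simp add: ps_D_eq_sum_ps_E fun_eq_iff)
  then show ?thesis by (simp add: ps_D_eq_sum_ps_E ps_E_sum ps_E_scale sum_distrib_left mult.assoc)
qed

lemma sum_swap_pairs:
  "(\<Sum>a\<in>A. \<Sum>b\<in>B. \<Sum>c\<in>C. \<Sum>d\<in>D. g a b c d) = (\<Sum>c\<in>C. \<Sum>d\<in>D. \<Sum>a\<in>A. \<Sum>b\<in>B. g a b c d)"
  by (subst sum.swap, subst (2) sum.swap, simp add: sum.swap[of _ B])

lemma sum_matrix_mult_kronecker:
  fixes A B :: "real^'n::finite^'n" and e :: "'n \<Rightarrow> 'n \<Rightarrow> real"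
  shows "(\<Sum>i\<in>UNIV. \<Sum>j\<in>UNIV. \<Sum>k\<in>UNIV. \<Sum>l\<in>UNIV. A$i$j * B$k$l * (of_bool (i = l) * e k j))
      = (\<Sum>k\<in>UNIV. \<Sum>j\<in>UNIV. (B ** A)$k$j * e k j)"
    and "(\<Sum>i\<in>UNIV. \<Sum>j\<in>UNIV. \<Sum>k\<in>UNIV. \<Sum>l\<in>UNIV. A$i$j * B$k$l * (of_bool (k = j) * e i l))
      = (\<Sum>i\<in>UNIV. \<Sum>l\<in>UNIV. (A ** B)$i$l * e i l)"
proof -
  have "(\<Sum>i\<in>UNIV. \<Sum>j\<in>UNIV. \<Sum>k\<in>UNIV. \<Sum>l\<in>UNIV. A$i$j * B$k$l * (of_bool (i = l) * e k j))
      = (\<Sum>i\<in>UNIV. \<Sum>j\<in>UNIV. \<Sum>k\<in>UNIV. A$i$j * B$k$i * e k j)"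
    by (simp add: mult.left_commute[of _ "of_bool _"])
  also have "\<dots> = (\<Sum>j\<in>UNIV. \<Sum>i\<in>UNIV. \<Sum>k\<in>UNIV. A$i$j * B$k$i * e k j)"
    by (rule sum.swap)
  also have "\<dots> = (\<Sum>j\<in>UNIV. \<Sum>k\<in>UNIV. \<Sum>i\<in>UNIV. A$i$j * B$k$i * e k j)"
    by (intro sum.cong refl sum.swap)
  also have "\<dots> = (\<Sum>k\<in>UNIV. \<Sum>j\<in>UNIV. \<Sum>i\<in>UNIV. A$i$j * B$k$i * e k j)"
    by (rule sum.swap)
  finally show "(\<Sum>i\<in>UNIV. \<Sum>j\<in>UNIV. \<Sum>k\<in>UNIV. \<Sum>l\<in>UNIV. A$i$j * B$k$l * (of_bool (i = l) * e k j))
      = (\<Sum>k\<in>UNIV. \<Sum>j\<in>UNIV. (B ** A)$k$j * e k j)"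
    by (simp add: matrix_matrix_mult_def sum_distrib_left sum_distrib_right mult_ac)
  have "(\<Sum>i\<in>UNIV. \<Sum>j\<in>UNIV. \<Sum>k\<in>UNIV. \<Sum>l\<in>UNIV. A$i$j * B$k$l * (of_bool (k = j) * e i l))
      = (\<Sum>i\<in>UNIV. \<Sum>j\<in>UNIV. \<Sum>l\<in>UNIV. \<Sum>k\<in>UNIV. A$i$j * B$k$l * (of_bool (k = j) * e i l))"
    by (intro sum.cong refl sum.swap)
  also have "\<dots> = (\<Sum>i\<in>UNIV. \<Sum>j\<in>UNIV. \<Sum>l\<in>UNIV. A$i$j * B$j$l * e i l)"
    by (simp add: mult.left_commute[of _ "of_bool _"])
  also have "\<dots> = (\<Sum>i\<in>UNIV. \<Sum>l\<in>UNIV. \<Sum>j\<in>UNIV. A$i$j * B$j$l * e i l)"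
    by (intro sum.cong refl sum.swap)
  finally show "(\<Sum>i\<in>UNIV. \<Sum>j\<in>UNIV. \<Sum>k\<in>UNIV. \<Sum>l\<in>UNIV. A$i$j * B$k$l * (of_bool (k = j) * e i l))
      = (\<Sum>i\<in>UNIV. \<Sum>l\<in>UNIV. (A ** B)$i$l * e i l)"
    by (simp add: matrix_matrix_mult_def sum_distrib_left sum_distrib_right mult_ac)
qed

lemma ps_D_commutator: "ps_D A (ps_D B f) \<alpha> - ps_D B (ps_D A f) \<alpha> = ps_D (B ** A - A ** B) f \<alpha>"
proof -
  have "ps_D A (ps_D B f) \<alpha> - ps_D B (ps_D A f) \<alpha> =
    (\<Sum>i\<in>UNIV. \<Sum>j\<in>UNIV. \<Sum>k\<in>UNIV. \<Sum>l\<in>UNIV.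
       A$i$j * B$k$l * (ps_E i j (ps_E k l f) \<alpha> - ps_E k l (ps_E i j f) \<alpha>))"
    unfolding ps_D_ps_D_eq[of A] ps_D_ps_D_eq[of B]
      sum_swap_pairs[where g = "\<lambda>a b c d. B$a$b * A$c$d * ps_E a b (ps_E c d f) \<alpha>"]
    by (simp add: sum_subtractf algebra_simps)
  also have "\<dots> = (\<Sum>i\<in>UNIV. \<Sum>j\<in>UNIV. \<Sum>k\<in>UNIV. \<Sum>l\<in>UNIV. A$i$j * B$k$l * (of_bool (i = l) * ps_E k j f \<alpha>))
     - (\<Sum>i\<in>UNIV. \<Sum>j\<in>UNIV. \<Sum>k\<in>UNIV. \<Sum>l\<in>UNIV. A$i$j * B$k$l * (of_bool (k = j) * ps_E i l f \<alpha>))"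
    unfolding ps_E_commutator by (simp add: sum_subtractf algebra_simps)
  also have "\<dots> = ps_D (B ** A) f \<alpha> - ps_D (A ** B) f \<alpha>"
    unfolding ps_D_eq_sum_ps_E sum_matrix_mult_kronecker ..
  finally show ?thesis by (simp add: ps_D_matrix_diff)
qed

lemma sl2_ps_D_Z_ps_D_X_funpow:
  assumes "sl2_triad X Y Z" "ps_D Z f = (\<lambda>\<alpha>. w * f \<alpha>)"
  shows "ps_D Z ((ps_D X ^^ j) f) = (\<lambda>\<alpha>. (w - 2 * real j) * (ps_D X ^^ j) f \<alpha>)"
proof (induction j)
  case (Suc j)
  have XZ: "X ** Z - Z ** X = - (2 *\<^sub>R X)"
    using assms(1) unfolding sl2_triad_def by (metis minus_diff_eq)
  show ?case
  proof
    fix \<alpha>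
    let ?h = "(ps_D X ^^ j) f"
    have "ps_D Z (ps_D X ?h) \<alpha> = ps_D X (ps_D Z ?h) \<alpha> + ps_D (X ** Z - Z ** X) ?h \<alpha>"
      using ps_D_commutator[of Z X ?h \<alpha>] by simp
    also have "\<dots> = (w - 2 * real j) * ps_D X ?h \<alpha> - 2 * ps_D X ?h \<alpha>"
      unfolding Suc XZ ps_D_scale ps_D_matrix_uminus ps_D_matrix_scaleR by simp
    finally show "ps_D Z ((ps_D X ^^ Suc j) f) \<alpha> = (w - 2 * real (Suc j)) * (ps_D X ^^ Suc j) f \<alpha>"
      by (simp add: algebra_simps)
  qed
qed (use assms in simp)

lemma sl2_ps_D_Y_ps_D_X_funpow:
  assumes "sl2_triad X Y Z" "ps_D Z f = (\<lambda>\<alpha>. w * f \<alpha>)" "ps_D Y f = (\<lambda>_. 0)"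
  shows "ps_D Y ((ps_D X ^^ Suc j) f) = (\<lambda>\<alpha>. (real j + 1) * (w - real j) * (ps_D X ^^ j) f \<alpha>)"
proof (induction j)
  case 0
  show ?case
  proof
    fix \<alpha>
    have "ps_D Y (ps_D X f) \<alpha> = ps_D X (ps_D Y f) \<alpha> + ps_D (X ** Y - Y ** X) f \<alpha>"
      using ps_D_commutator[of Y X f \<alpha>] by simp
    also have "\<dots> = w * f \<alpha>"
      using assms ps_D_scale[of X 0 f \<alpha>] unfolding sl2_triad_def by simp
    finally show "ps_D Y ((ps_D X ^^ Suc 0) f) \<alpha> = (real 0 + 1) * (w - real 0) * (ps_D X ^^ 0) f \<alpha>"
      by simp
  qed
next
  case (Suc j)
  show ?case
  proof
    fix \<alpha>
    let ?h = "(ps_D X ^^ Suc j) f"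
    have "ps_D Y (ps_D X ?h) \<alpha> = ps_D X (ps_D Y ?h) \<alpha> + ps_D (X ** Y - Y ** X) ?h \<alpha>"
      using ps_D_commutator[of Y X ?h \<alpha>] by simp
    also have "\<dots> = (real j + 1) * (w - real j) * ps_D X ((ps_D X ^^ j) f) \<alpha> + (w - 2 * real (Suc j)) * ?h \<alpha>"
      using assms(1) sl2_ps_D_Z_ps_D_X_funpow[OF assms(1,2), of "Suc j"]
      unfolding Suc ps_D_scale sl2_triad_def by simp
    finally show "ps_D Y ((ps_D X ^^ Suc (Suc j)) f) \<alpha>
        = (real (Suc j) + 1) * (w - real (Suc j)) * (ps_D X ^^ Suc j) f \<alpha>"
      by (simp add: algebra_simps)
  qed
qed

definition lowering_factor :: "real \<Rightarrow> nat \<Rightarrow> nat \<Rightarrow> real" where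
  "lowering_factor w k j = (\<Prod>i<k. (real j - real i) * (w - real j + real i + 1))"

lemma lowering_factor_eq_0: "j < k \<Longrightarrow> lowering_factor w k j = 0"
  unfolding lowering_factor_def by (rule prod_zero) auto

lemma lowering_factor_diag_neq_0: "j \<le> w \<Longrightarrow> lowering_factor (real w) j j \<noteq> 0"
  unfolding lowering_factor_def by (subst prod_zero_iff) auto

lemma sl2_ps_D_Y_funpow_ps_D_X_funpow:
  assumes "sl2_triad X Y Z" "ps_D Z f = (\<lambda>\<alpha>. w * f \<alpha>)" "ps_D Y f = (\<lambda>_. 0)"
  shows "(ps_D Y ^^ k) ((ps_D X ^^ j) f) = (\<lambda>\<alpha>. lowering_factor w k j * (ps_D X ^^ (j - k)) f \<alpha>)"
proof (induction k)
  case (Suc k)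
  show ?case
  proof
    fix \<alpha>
    have "(ps_D Y ^^ Suc k) ((ps_D X ^^ j) f) \<alpha> = lowering_factor w k j * ps_D Y ((ps_D X ^^ (j - k)) f) \<alpha>"
      by (simp add: Suc ps_D_scale)
    also have "\<dots> = lowering_factor w (Suc k) j * (ps_D X ^^ (j - Suc k)) f \<alpha>"
    proof (cases "k < j")
      case True
      then obtain m where m: "j - k = Suc m" "j - Suc k = m"
        by (metis Suc_diff_Suc)
      then have "real m + 1 = real j - real k" "w - real m = w - real j + real k + 1"
        using True by linarith+
      then show ?thesis
        unfolding m sl2_ps_D_Y_ps_D_X_funpow[OF assms] by (simp add: lowering_factor_def algebra_simps)
    qed (use assms(3) in \<open>simp add: lowering_factor_eq_0\<close>)
    finally show "(ps_D Y ^^ Suc k) ((ps_D X ^^ j) f) \<alpha>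
        = lowering_factor w (Suc k) j * (ps_D X ^^ (j - Suc k)) f \<alpha>" .
  qed
qed (simp add: lowering_factor_def)

lemma on_x_funpow: "(on_x T ^^ k) F = (\<lambda>\<alpha> \<beta>. (T ^^ k) (\<lambda>\<gamma>. F \<gamma> \<beta>) \<alpha>)"
  by (induction k) (simp_all add: on_x_def)

lemma on_x_ps_D_funpow_ext_transvectant:
  assumes "sl2_triad Xa Ya Za" "ps_D Za f = (\<lambda>\<alpha>. real wtf * f \<alpha>)" "ps_D Ya f = (\<lambda>_. 0)"
  shows "(on_x (ps_D Ya) ^^ k) (ext_transvectant Xa Xg wtf wtg s f g) = (\<lambda>\<alpha> \<beta>.
     \<Sum>j\<le>s. (-1) ^ j * real (s choose j)
        * (fact (wtf - j) / fact (wtf - s)) * (fact (wtg - s + j) / fact (wtg - s))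
        * (lowering_factor wtf k j * (ps_D Xa ^^ (j - k)) f \<alpha>) * (ps_D Xg ^^ (s - j)) g \<beta>)"
proof -
  define c where "c j \<beta> = (-1) ^ j * real (s choose j)
        * (fact (wtf - j) / fact (wtf - s)) * (fact (wtg - s + j) / fact (wtg - s))
        * (ps_D Xg ^^ (s - j)) g \<beta>" for j \<beta>
  have transvectant_eq: "(\<lambda>\<gamma>. ext_transvectant Xa Xg wtf wtg s f g \<gamma> \<beta>)
      = (\<lambda>\<gamma>. \<Sum>j\<le>s. c j \<beta> * (ps_D Xa ^^ j) f \<gamma>)" for \<beta>
    unfolding ext_transvectant_def c_def by (intro ext sum.cong refl) (simp add: mult_ac)
  show ?thesis
    unfolding on_x_funpow transvectant_eq ps_D_funpow_sum sl2_ps_D_Y_funpow_ps_D_X_funpow[OF assms]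
    by (simp add: c_def mult_ac)
qed

theorem lemma7p3:
  fixes Xa Ya Za :: "real^'n::finite^'n" and Xg Yg Zg :: "real^'m::finite^'m"
    and f :: "'n ps" and g :: "'m ps" and wtf wtg s :: nat
  assumes "sl2_triad Xa Ya Za" and "sl2_triad Xg Yg Zg"
    and "ps_D Ya f = (\<lambda>_. 0)" and "ps_D Za f = (\<lambda>\<alpha>. real wtf * f \<alpha>)"
    and "ps_D Yg g = (\<lambda>_. 0)" and "ps_D Zg g = (\<lambda>\<beta>. real wtg * g \<beta>)"
    and "s \<le> wtf" and "s \<le> wtg"
  shows "\<exists>c::real. c \<noteq> 0 \<and>
      (on_x (ps_D Ya) ^^ s) (ext_transvectant Xa Xg wtf wtg s f g) = (\<lambda>\<alpha> \<beta>. c * ext_prod f g \<alpha> \<beta>) \<and>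
      (\<forall>k>s. (on_x (ps_D Ya) ^^ k) (ext_transvectant Xa Xg wtf wtg s f g) = (\<lambda>\<alpha> \<beta>. 0))"
proof (intro exI conjI allI impI)
  note transvectant = on_x_ps_D_funpow_ext_transvectant[OF assms(1,4,3)]
  let ?c = "(-1) ^ s * (fact wtg / fact (wtg - s)) * lowering_factor wtf s s"
  show "?c \<noteq> 0"
    using lowering_factor_diag_neq_0[OF assms(7)] by simp
  show "(on_x (ps_D Ya) ^^ s) (ext_transvectant Xa Xg wtf wtg s f g) = (\<lambda>\<alpha> \<beta>. ?c * ext_prod f g \<alpha> \<beta>)"
    \<comment> \<open>only the summand j = s survives\<close>
    unfolding transvectant using assms(8)
    by (subst sum.remove[of _ s]) (auto intro!: ext sum.neutral simp: lowering_factor_eq_0 ext_prod_def)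
  show "(on_x (ps_D Ya) ^^ k) (ext_transvectant Xa Xg wtf wtg s f g) = (\<lambda>\<alpha> \<beta>. 0)" if "k > s" for k
    unfolding transvectant using that by (auto intro!: ext sum.neutral simp: lowering_factor_eq_0)
qed

end
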